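(* Let $H\in(\frac12,1)$, $T>0$, let $B^H$ be an $m$-dimensional fractional Brownian motion with Hurst parameter $H$ on $[0,T]$, and for $n\ge1$ let $B^{n,H}_t=\sum_{k=0}^{n-1}\big(B^H_{t_k}+\frac nT(t-t_k)(B^H_{t_{k+1}}-B^H_{t_k})\big)\mathbf 1_{(t_k,t_{k+1}]}(t)$ with $t_k=kT/n$. Then for any $\alpha\in(1-H,\frac12)$, almost surely $$\sup_n\Lambda_\alpha(B^{n,H})<+\infty\quad\text{and}\quad\lim_{n\to\infty}\Lambda_\alpha(B^{n,H}-B^H)=0.$$
   Context: For $g:[0,T]\to\mathbb{R}^m$ in $W_T^{1-\alpha,\infty}$ (measurable with $\sup_{0<s<t<T}\big(\frac{|g(t)-g(s)|}{(t-s)^{1-\alpha}}+\int_s^t\frac{|g(y)-g(s)|}{(y-s)^{2-\alpha}}dy\big)<\infty$), $$\Lambda_\alpha(g)=\frac1{\Gamma(1-\alpha)}\sup_{0<s<t<T}\big|(D_{t-}^{1-\alpha}g_{t-})(s)\big|,$$ where $g_{t-}(s)=g(s)-g(t)$ and $D_{t-}^{1-\alpha}f(s)=\frac{(-1)^{1-\alpha}}{\Gamma(\alpha)}\Big(\frac{f(s)}{(t-s)^{1-\alpha}}+(1-\alpha)\int_s^t\frac{f(s)-f(y)}{(y-s)^{2-\alpha}}dy\Big)$. *)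

theory Defs
  imports "HOL-Probability.Probability"
begin

definition centered_gaussian :: "'a measure \<Rightarrow> ('a \<Rightarrow> real) \<Rightarrow> real \<Rightarrow> bool" where
  "centered_gaussian M X v \<longleftrightarrow>
     (v = 0 \<and> X \<in> borel_measurable M \<and> (AE x in M. X x = 0)) \<or>
     (v > 0 \<and> distributed M lborel X (\<lambda>x. ennreal (normal_density 0 (sqrt v) x)))"

definition fbm_cov :: "real \<Rightarrow> real \<Rightarrow> real \<Rightarrow> real" where
  "fbm_cov H s t = (s powr (2*H) + t powr (2*H) - \<bar>t - s\<bar> powr (2*H)) / 2"

text \<open>m-dimensional fractional Brownian motion on [0,T] (components independent fBm's):
  a family of random vectors, jointly Gaussian (every finite linear combination of
  coordinates is centered Gaussian) with covariance
  E[B_s^i B_t^j] = delta_ij R_H(s,t), with (almost surely) continuous sample paths.\<close>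
definition is_fbm :: "'a measure \<Rightarrow> real \<Rightarrow> real \<Rightarrow> (real \<Rightarrow> 'a \<Rightarrow> real ^ 'm::finite) \<Rightarrow> bool" where
  "is_fbm M H T B \<longleftrightarrow>
     prob_space M \<and>
     (\<forall>t\<in>{0..T}. B t \<in> borel_measurable M) \<and>
     (\<forall>(N::nat) (ts :: nat \<Rightarrow> real) (c :: nat \<Rightarrow> 'm \<Rightarrow> real).
        (\<forall>j<N. ts j \<in> {0..T}) \<longrightarrow>
        centered_gaussian M (\<lambda>\<omega>. \<Sum>j<N. \<Sum>i\<in>UNIV. c j i * (B (ts j) \<omega> $ i))
          (\<Sum>j<N. \<Sum>k<N. \<Sum>i\<in>UNIV. c j i * c k i * fbm_cov H (ts j) (ts k))) \<and>
     (AE \<omega> in M. continuous_on {0..T} (\<lambda>t. B t \<omega>))"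

definition W_space :: "real \<Rightarrow> real \<Rightarrow> (real \<Rightarrow> real ^ 'm::finite) \<Rightarrow> bool" where
  "W_space \<alpha> T g \<longleftrightarrow>
     g \<in> borel_measurable (restrict_space lborel {0..T}) \<and>
     (SUP st \<in> {(s,t). 0 < s \<and> s < t \<and> t < T}.
        ennreal (norm (g (snd st) - g (fst st)) / (snd st - fst st) powr (1 - \<alpha>)) +
        (\<integral>\<^sup>+ y \<in> {fst st..snd st}. ennreal (norm (g y - g (fst st)) / (y - fst st) powr (2 - \<alpha>)) \<partial>lborel))
       < \<infinity>"

text \<open>Lambda_alpha(g) (as an extended real; note |(-1)^(1-alpha)| = 1).\<close>
definition Lambda :: "real \<Rightarrow> real \<Rightarrow> (real \<Rightarrow> real ^ 'm::finite) \<Rightarrow> ereal" where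
  "Lambda \<alpha> T g =
     (SUP st \<in> {(s,t). 0 < s \<and> s < t \<and> t < T}.
        ereal (norm ((1 / Gamma \<alpha>) *\<^sub>R
          ((1 / (snd st - fst st) powr (1 - \<alpha>)) *\<^sub>R (g (fst st) - g (snd st)) +
           (1 - \<alpha>) *\<^sub>R (LINT y:{fst st..snd st}|lborel.
               (1 / (y - fst st) powr (2 - \<alpha>)) *\<^sub>R (g (fst st) - g y))))))
     / ereal (Gamma (1 - \<alpha>))"

definition interp :: "real \<Rightarrow> nat \<Rightarrow> (real \<Rightarrow> real ^ 'm::finite) \<Rightarrow> real \<Rightarrow> real ^ 'm" where
  "interp T n g t = (\<Sum>k<n. indicator {real k * T / n <.. real (k+1) * T / n} t *\<^sub>R
       (g (real k * T / n) + (real n / T * (t - real k * T / n)) *\<^sub>R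
          (g (real (k+1) * T / n) - g (real k * T / n))))"

end

theory Submission
  imports Defs
begin

text \<open>
  The statement is pathwise once almost every path of \<open>B\<close> is known to be \<open>\<beta>\<close>-Holder on
  \<open>[0, T]\<close> for some \<open>\<beta>\<close> between \<open>1 - \<alpha>\<close> and \<open>H\<close>. This is the Kolmogorov--Chentsov argument:
  Gaussian moment bounds for the dyadic increments, the Borel--Cantelli lemma, and chaining
  along dyadic approximations. For a path \<open>f\<close> that is \<open>\<beta>\<close>-Holder with constant \<open>K\<close>, its
  piecewise linear interpolation \<open>f\<^sub>n\<close> on the grid of mesh \<open>T/n\<close> is \<open>\<beta>\<close>-Holder with constant \<open>3K\<close>.
  The error \<open>f\<^sub>n - f\<close> is bounded by \<open>4K|t - s|\<^sup>\<beta>\<close> and by \<open>4K(T/n)\<^sup>\<beta>\<close>, so it is \<open>\<beta>'\<close>-Holder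
  with constant \<open>4K(T/n)\<^bsup>\<beta>-\<beta>'\<^esup>\<close> for any \<open>\<beta>' < \<beta>\<close>. Finally, a \<open>\<gamma>\<close>-Holder function with
  \<open>\<gamma> > 1 - \<alpha>\<close> lies in \<open>W\<^bsup>1-\<alpha>,\<infinity>\<^esup>\<close>, and its \<open>\<Lambda>\<^sub>\<alpha>\<close> is at most a constant times its Holder
  constant: the singular kernel \<open>(y - s)\<^bsup>\<alpha>-2\<^esup>\<close> is integrated against \<open>|y - s|\<^sup>\<gamma>\<close>.
\<close>

section \<open>Holder continuous functions\<close>

definition holder_on :: "real set \<Rightarrow> real \<Rightarrow> real \<Rightarrow> (real \<Rightarrow> 'b::real_normed_vector) \<Rightarrow> bool" where
  "holder_on S \<gamma> L g \<longleftrightarrow> (\<forall>s\<in>S. \<forall>t\<in>S. norm (g t - g s) \<le> L * \<bar>t - s\<bar> powr \<gamma>)"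

lemma holder_onD:
  "holder_on S \<gamma> L g \<Longrightarrow> s \<in> S \<Longrightarrow> t \<in> S \<Longrightarrow> norm (g t - g s) \<le> L * \<bar>t - s\<bar> powr \<gamma>"
  unfolding holder_on_def by blast

lemma holder_onI:
  assumes "\<And>s t. s \<in> S \<Longrightarrow> t \<in> S \<Longrightarrow> s \<le> t \<Longrightarrow> norm (g t - g s) \<le> L * (t - s) powr \<gamma>"
  shows "holder_on S \<gamma> L g"
  unfolding holder_on_def
proof (intro ballI)
  fix s t assume st: "s \<in> S" "t \<in> S"
  show "norm (g t - g s) \<le> L * \<bar>t - s\<bar> powr \<gamma>"
  proof (cases "s \<le> t")
    case True
    then show ?thesis using assms[OF st True] by simp
  next
    case False
    then show ?thesis using assms[OF st(2,1)] by (simp add: norm_minus_commute)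
  qed
qed

lemma holder_on_subset: "holder_on S \<gamma> L g \<Longrightarrow> A \<subseteq> S \<Longrightarrow> holder_on A \<gamma> L g"
  unfolding holder_on_def by blast

lemma holder_on_mono_const: "holder_on S \<gamma> L g \<Longrightarrow> L \<le> L' \<Longrightarrow> holder_on S \<gamma> L' g"
  unfolding holder_on_def by (meson mult_right_mono order_trans powr_ge_zero)

lemma holder_on_imp_continuous_on:
  assumes H: "holder_on S \<gamma> L g" and \<gamma>: "\<gamma> > 0"
  shows "continuous_on S g"
  unfolding continuous_on_def
proof (intro ballI)
  fix x assume x: "x \<in> S"
  have "((\<lambda>y. L * \<bar>y - x\<bar> powr \<gamma>) \<longlongrightarrow> L * 0) (at x within S)"
    by (intro tendsto_mult tendsto_const tendsto_zero_powrI[OF _ tendsto_const] tendsto_rabs_zero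
        LIM_zero tendsto_ident_at) (use \<gamma> in auto)
  then have lim: "((\<lambda>y. L * \<bar>y - x\<bar> powr \<gamma>) \<longlongrightarrow> 0) (at x within S)"
    by simp
  have "((\<lambda>y. g y - g x) \<longlongrightarrow> 0) (at x within S)"
  proof (rule Lim_null_comparison[OF _ lim])
    show "\<forall>\<^sub>F y in at x within S. norm (g y - g x) \<le> L * \<bar>y - x\<bar> powr \<gamma>"
      unfolding eventually_at_filter by (auto intro!: always_eventually holder_onD[OF H x])
  qed
  then show "(g \<longlongrightarrow> g x) (at x within S)"
    by (simp add: LIM_zero_iff)
qed

lemma borel_measurable_restrict_lborel_if_continuous_on:
  fixes f :: "real \<Rightarrow> 'b::topological_space"
  assumes "continuous_on S f"
  shows "f \<in> borel_measurable (restrict_space lborel S)"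
proof -
  have "sets (restrict_space lborel S) = sets (restrict_space borel S)"
    by (simp add: sets_restrict_space)
  then show ?thesis
    using borel_measurable_continuous_on_restrict[OF assms] measurable_cong_sets by blast
qed

lemma holder_on_rescale:
  assumes H: "holder_on {0..1} \<gamma> K (\<lambda>u. g (T * u))" and T: "T > 0"
  shows "holder_on {0..T} \<gamma> (K / T powr \<gamma>) g"
  unfolding holder_on_def
proof (intro ballI)
  fix s t assume "s \<in> {0..T}" "t \<in> {0..T}"
  then have "norm (g (T * (t / T)) - g (T * (s / T))) \<le> K * \<bar>t / T - s / T\<bar> powr \<gamma>"
    using T by (intro holder_onD[OF H]) auto
  also have "\<bar>t / T - s / T\<bar> powr \<gamma> = \<bar>t - s\<bar> powr \<gamma> / T powr \<gamma>"
    using T by (simp add: diff_divide_distrib[symmetric] powr_divide)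
  finally show "norm (g t - g s) \<le> K / T powr \<gamma> * \<bar>t - s\<bar> powr \<gamma>"
    using T by simp
qed

lemma holder_on_vec_sum:
  fixes g :: "real \<Rightarrow> real ^ 'm::finite"
  assumes "\<And>i. holder_on S \<gamma> (K i) (\<lambda>t. g t $ i)"
  shows "holder_on S \<gamma> (\<Sum>i\<in>UNIV. K i) g"
  unfolding holder_on_def
proof (intro ballI)
  fix s t assume s: "s \<in> S" and t: "t \<in> S"
  have "norm (g t - g s) \<le> (\<Sum>i\<in>UNIV. \<bar>(g t - g s) $ i\<bar>)"
    by (rule norm_le_l1_cart)
  also have "\<dots> \<le> (\<Sum>i\<in>UNIV. K i * \<bar>t - s\<bar> powr \<gamma>)"
    using holder_onD[OF assms s t] by (intro sum_mono) simp
  finally show "norm (g t - g s) \<le> (\<Sum>i\<in>UNIV. K i) * \<bar>t - s\<bar> powr \<gamma>"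
    by (simp add: sum_distrib_right)
qed

lemma holder_on_quotient_le:
  assumes H: "holder_on S \<gamma> L g" and "s \<in> S" "y \<in> S" "s \<le> y"
  shows "norm (g y - g s) / (y - s) powr c \<le> L * (y - s) powr (\<gamma> - c)"
proof (cases "y = s")
  case False
  then have ys: "y - s > 0" using assms by simp
  have "norm (g y - g s) / (y - s) powr c \<le> L * (y - s) powr \<gamma> / (y - s) powr c"
    using holder_onD[OF H assms(2,3)] ys by (intro divide_right_mono) auto
  also have "\<dots> = L * (y - s) powr (\<gamma> - c)"
    using ys by (simp add: powr_diff)
  finally show ?thesis .
qed simp

section \<open>The fractional derivative of a Holder function\<close>

lemma has_integral_powr_shift:
  fixes s t e :: real
  assumes "s \<le> t" "e > -1"
  shows "((\<lambda>y. (y - s) powr e) has_integral ((t - s) powr (e + 1) / (e + 1))) {s..t}"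
proof -
  have "((\<lambda>x. x powr e) has_integral ((t - s) powr (e + 1) / (e + 1))) {0..t - s}"
    using has_integral_powr_from_0[OF assms(2)] assms(1) by simp
  from has_integral_shift_real_ivl[OF this, of "-s"] show ?thesis by simp
qed

lemma nn_integral_powr_shift:
  fixes s t e :: real
  assumes "s \<le> t" "e > -1"
  shows "(\<integral>\<^sup>+ y. ennreal (indicator {s..t} y * (y - s) powr e) \<partial>lborel)
           = ennreal ((t - s) powr (e + 1) / (e + 1))"
proof -
  have "((\<lambda>y. if y \<in> {s..t} then (y - s) powr e else 0) has_integral ((t - s) powr (e + 1) / (e + 1))) UNIV"
    using has_integral_powr_shift[OF assms] by (subst has_integral_restrict_UNIV)
  moreover have "(\<lambda>y. if y \<in> {s..t} then (y - s) powr e else 0) = (\<lambda>y. indicator {s..t} y * (y - s) powr e)"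
    by (auto simp: indicator_def)
  ultimately show ?thesis
    by (intro nn_integral_has_integral_lborel) auto
qed

lemma set_integrable_powr_shift:
  fixes s t e :: real
  assumes "s \<le> t" "e > -1"
  shows "set_integrable lborel {s..t} (\<lambda>y. (y - s) powr e)"
  unfolding set_integrable_def
proof (rule integrableI_nonneg)
  show "(\<lambda>x. indicat_real {s..t} x *\<^sub>R (x - s) powr e) \<in> borel_measurable lborel"
    by measurable
  show "(\<integral>\<^sup>+ x. ennreal (indicat_real {s..t} x *\<^sub>R (x - s) powr e) \<partial>lborel) < \<infinity>"
    using nn_integral_powr_shift[OF assms] by simp
qed auto

lemma set_integral_powr_shift:
  fixes s t e :: real
  assumes "s \<le> t" "e > -1"
  shows "(LINT y:{s..t}|lborel. (y - s) powr e) = (t - s) powr (e + 1) / (e + 1)"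
  using set_borel_integral_eq_integral(2)[OF set_integrable_powr_shift[OF assms]]
    integral_unique[OF has_integral_powr_shift[OF assms]] by simp

lemma holder_weighted_nn_integral_le:
  fixes g :: "real \<Rightarrow> 'b::real_normed_vector"
  assumes H: "holder_on {s..t} \<gamma> L g" and st: "s \<le> t" and L: "L \<ge> 0" and \<gamma>: "1 - \<alpha> < \<gamma>"
  shows "(\<integral>\<^sup>+ y \<in> {s..t}. ennreal (norm (g y - g s) / (y - s) powr (2 - \<alpha>)) \<partial>lborel)
           \<le> ennreal (L * ((t - s) powr (\<gamma> - (1 - \<alpha>)) / (\<gamma> - (1 - \<alpha>))))"
proof -
  have e: "\<gamma> - (2 - \<alpha>) > -1" and pe: "\<gamma> - (2 - \<alpha>) + 1 = \<gamma> - (1 - \<alpha>)"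
    using \<gamma> by auto
  have "(\<integral>\<^sup>+ y \<in> {s..t}. ennreal (norm (g y - g s) / (y - s) powr (2 - \<alpha>)) \<partial>lborel)
      \<le> (\<integral>\<^sup>+ y. ennreal L * ennreal (indicator {s..t} y * (y - s) powr (\<gamma> - (2 - \<alpha>))) \<partial>lborel)"
    using holder_on_quotient_le[OF H] L
    by (intro nn_integral_mono) (auto simp: indicator_def ennreal_mult[symmetric] intro!: ennreal_leI)
  also have "\<dots> = ennreal L * ennreal ((t - s) powr (\<gamma> - (1 - \<alpha>)) / (\<gamma> - (1 - \<alpha>)))"
    using nn_integral_powr_shift[OF st e] by (simp add: nn_integral_cmult pe)
  finally show ?thesis
    by (simp only: ennreal_mult'[OF L])
qed

lemma holder_weighted_set_integrable:
  fixes g :: "real \<Rightarrow> 'b::{banach,second_countable_topology}"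
  assumes H: "holder_on {s..t} \<gamma> L g" and st: "s \<le> t" and \<gamma>: "1 - \<alpha> < \<gamma>" "0 < \<gamma>"
  shows "set_integrable lborel {s..t} (\<lambda>y. (1 / (y - s) powr (2 - \<alpha>)) *\<^sub>R (g s - g y))"
  unfolding set_integrable_def
proof (rule Bochner_Integration.integrable_bound)
  have e: "\<gamma> - (2 - \<alpha>) > -1"
    using \<gamma> by simp
  show "integrable lborel (\<lambda>y. indicator {s..t} y *\<^sub>R (L * (y - s) powr (\<gamma> - (2 - \<alpha>))))"
    using set_integrable_mult_right[OF set_integrable_powr_shift[OF st e], of L]
    unfolding set_integrable_def .
  have "continuous_on {s..t} (\<lambda>y. g s - g y)"
    by (intro continuous_intros holder_on_imp_continuous_on[OF H \<gamma>(2)])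
  then have ind: "(\<lambda>y. indicator {s..t} y *\<^sub>R (g s - g y)) \<in> borel_measurable borel"
    by (rule borel_measurable_continuous_on_indicator[rotated]) simp
  show "(\<lambda>y. indicator {s..t} y *\<^sub>R ((1 / (y - s) powr (2 - \<alpha>)) *\<^sub>R (g s - g y))) \<in> borel_measurable lborel"
    unfolding scaleR_left_commute[of "indicator _ _"] measurable_lborel2
    by (rule borel_measurable_scaleR[OF _ ind]) measurable
  show "AE y in lborel. norm (indicator {s..t} y *\<^sub>R ((1 / (y - s) powr (2 - \<alpha>)) *\<^sub>R (g s - g y)))
      \<le> norm (indicator {s..t} y *\<^sub>R (L * (y - s) powr (\<gamma> - (2 - \<alpha>))))"
    using holder_on_quotient_le[OF H, of s _ "2 - \<alpha>"] st
    by (intro AE_I2) (auto simp: indicator_def norm_minus_commute intro: order_trans[OF _ abs_ge_self])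
qed

lemma holder_weighted_integral_norm_le:
  fixes g :: "real \<Rightarrow> 'b::{banach,second_countable_topology}"
  assumes H: "holder_on {s..t} \<gamma> L g" and st: "s \<le> t" and \<gamma>: "1 - \<alpha> < \<gamma>" "0 < \<gamma>"
  shows "norm (LINT y:{s..t}|lborel. (1 / (y - s) powr (2 - \<alpha>)) *\<^sub>R (g s - g y))
           \<le> L * ((t - s) powr (\<gamma> - (1 - \<alpha>)) / (\<gamma> - (1 - \<alpha>)))"
proof -
  have e: "\<gamma> - (2 - \<alpha>) > -1" and pe: "\<gamma> - (2 - \<alpha>) + 1 = \<gamma> - (1 - \<alpha>)"
    using \<gamma> by auto
  note int = holder_weighted_set_integrable[OF H st \<gamma>]
  have "norm (LINT y:{s..t}|lborel. (1 / (y - s) powr (2 - \<alpha>)) *\<^sub>R (g s - g y))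
      \<le> (LINT y:{s..t}|lborel. norm ((1 / (y - s) powr (2 - \<alpha>)) *\<^sub>R (g s - g y)))"
    by (rule set_integral_norm_bound[OF int])
  also have "\<dots> \<le> (LINT y:{s..t}|lborel. L * (y - s) powr (\<gamma> - (2 - \<alpha>)))"
    using holder_on_quotient_le[OF H, of s _ "2 - \<alpha>"]
    by (intro set_integral_mono set_integrable_norm int set_integrable_mult_right
        set_integrable_powr_shift[OF st e]) (auto simp: norm_minus_commute)
  also have "\<dots> = L * ((t - s) powr (\<gamma> - (1 - \<alpha>)) / (\<gamma> - (1 - \<alpha>)))"
    using set_integral_powr_shift[OF st e] by (simp add: pe)
  finally show ?thesis .
qed

lemma fractional_derivative_norm_le:
  fixes g :: "real \<Rightarrow> 'b::{banach,second_countable_topology}"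
  assumes H: "holder_on {s..t} \<gamma> L g" and st: "s < t" and L: "L \<ge> 0"
    and \<alpha>: "0 < \<alpha>" "\<alpha> < 1" and \<gamma>: "1 - \<alpha> < \<gamma>"
  shows "norm ((1 / Gamma \<alpha>) *\<^sub>R ((1 / (t - s) powr (1 - \<alpha>)) *\<^sub>R (g s - g t) +
           (1 - \<alpha>) *\<^sub>R (LINT y:{s..t}|lborel. (1 / (y - s) powr (2 - \<alpha>)) *\<^sub>R (g s - g y))))
         \<le> L * (t - s) powr (\<gamma> - (1 - \<alpha>)) * (1 + (1 - \<alpha>) / (\<gamma> - (1 - \<alpha>))) / Gamma \<alpha>"
proof -
  let ?I = "LINT y:{s..t}|lborel. (1 / (y - s) powr (2 - \<alpha>)) *\<^sub>R (g s - g y)"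
  have \<gamma>0: "0 < \<gamma>"
    using \<alpha> \<gamma> by simp
  have "norm ((1 / (t - s) powr (1 - \<alpha>)) *\<^sub>R (g s - g t) + (1 - \<alpha>) *\<^sub>R ?I)
      \<le> norm (g t - g s) / (t - s) powr (1 - \<alpha>) + (1 - \<alpha>) * norm ?I"
    using norm_triangle_ineq[of "(1 / (t - s) powr (1 - \<alpha>)) *\<^sub>R (g s - g t)" "(1 - \<alpha>) *\<^sub>R ?I"] \<alpha>
    by (simp add: norm_minus_commute)
  also have "\<dots> \<le> L * (t - s) powr (\<gamma> - (1 - \<alpha>)) + (1 - \<alpha>) * (L * ((t - s) powr (\<gamma> - (1 - \<alpha>)) / (\<gamma> - (1 - \<alpha>))))"
    using holder_on_quotient_le[OF H, of s t] holder_weighted_integral_norm_le[OF H _ \<gamma> \<gamma>0] st \<alpha>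
    by (intro add_mono mult_left_mono) auto
  also have "\<dots> = L * (t - s) powr (\<gamma> - (1 - \<alpha>)) * (1 + (1 - \<alpha>) / (\<gamma> - (1 - \<alpha>)))"
    by (simp add: algebra_simps)
  finally show ?thesis
    using \<alpha> by (simp add: divide_right_mono)
qed

definition holder_Lambda_const :: "real \<Rightarrow> real \<Rightarrow> real \<Rightarrow> real" where
  "holder_Lambda_const \<alpha> \<gamma> T =
     T powr (\<gamma> - (1 - \<alpha>)) * (1 + (1 - \<alpha>) / (\<gamma> - (1 - \<alpha>))) / (Gamma \<alpha> * Gamma (1 - \<alpha>))"

lemma Lambda_le_holder:
  fixes g :: "real \<Rightarrow> real ^ 'm::finite"
  assumes H: "holder_on {0<..<T} \<gamma> L g" and L: "L \<ge> 0"
    and \<alpha>: "0 < \<alpha>" "\<alpha> < 1" and \<gamma>: "1 - \<alpha> < \<gamma>"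
  shows "Lambda \<alpha> T g \<le> ereal (holder_Lambda_const \<alpha> \<gamma> T * L)"
proof -
  define K where "K = L * T powr (\<gamma> - (1 - \<alpha>)) * (1 + (1 - \<alpha>) / (\<gamma> - (1 - \<alpha>))) / Gamma \<alpha>"
  have pair: "norm ((1 / Gamma \<alpha>) *\<^sub>R ((1 / (t - s) powr (1 - \<alpha>)) *\<^sub>R (g s - g t) +
           (1 - \<alpha>) *\<^sub>R (LINT y:{s..t}|lborel. (1 / (y - s) powr (2 - \<alpha>)) *\<^sub>R (g s - g y)))) \<le> K"
    if st: "0 < s" "s < t" "t < T" for s t
  proof -
    have "(t - s) powr (\<gamma> - (1 - \<alpha>)) \<le> T powr (\<gamma> - (1 - \<alpha>))"
      using st \<gamma> by (intro powr_mono2) auto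
    then have "L * (t - s) powr (\<gamma> - (1 - \<alpha>)) * (1 + (1 - \<alpha>) / (\<gamma> - (1 - \<alpha>))) / Gamma \<alpha> \<le> K"
      unfolding K_def using L \<alpha> \<gamma> by (intro divide_right_mono mult_right_mono mult_left_mono) auto
    moreover have "holder_on {s..t} \<gamma> L g"
      using st by (auto intro: holder_on_subset[OF H])
    ultimately show ?thesis
      using fractional_derivative_norm_le[OF _ st(2) L \<alpha> \<gamma>] by force
  qed
  have "Lambda \<alpha> T g \<le> ereal K / ereal (Gamma (1 - \<alpha>))"
    unfolding Lambda_def using \<alpha> pair by (intro ereal_divide_right_mono SUP_least) auto
  also have "\<dots> = ereal (holder_Lambda_const \<alpha> \<gamma> T * L)"
  proof -
    have "Gamma (1 - \<alpha>) > 0"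
      using \<alpha> by simp
    then show ?thesis
      unfolding K_def holder_Lambda_const_def by simp
  qed
  finally show ?thesis .
qed

lemma Lambda_nonneg:
  assumes "\<alpha> < 1" "T > 0"
  shows "0 \<le> Lambda \<alpha> T g"
proof -
  have "0 \<le> (SUP st \<in> {(s,t). 0 < s \<and> s < t \<and> t < T}.
        ereal (norm ((1 / Gamma \<alpha>) *\<^sub>R
          ((1 / (snd st - fst st) powr (1 - \<alpha>)) *\<^sub>R (g (fst st) - g (snd st)) +
           (1 - \<alpha>) *\<^sub>R (LINT y:{fst st..snd st}|lborel.
               (1 / (y - fst st) powr (2 - \<alpha>)) *\<^sub>R (g (fst st) - g y))))))"
    using assms by (intro SUP_upper2[of "(T/3, 2*T/3)"]) auto
  then show ?thesis
    unfolding Lambda_def using assms by (simp add: divide_ereal_def ereal_zero_le_0_iff)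
qed

lemma W_space_if_holder:
  fixes g :: "real \<Rightarrow> real ^ 'm::finite"
  assumes H: "holder_on {0<..<T} \<gamma> L g" and L: "L \<ge> 0" and \<gamma>: "1 - \<alpha> < \<gamma>"
    and meas: "g \<in> borel_measurable (restrict_space lborel {0..T})"
  shows "W_space \<alpha> T g"
proof -
  define p where "p = \<gamma> - (1 - \<alpha>)"
  have p: "p > 0"
    using \<gamma> by (simp add: p_def)
  have pair: "ennreal (norm (g t - g s) / (t - s) powr (1 - \<alpha>)) +
        (\<integral>\<^sup>+ y \<in> {s..t}. ennreal (norm (g y - g s) / (y - s) powr (2 - \<alpha>)) \<partial>lborel)
      \<le> ennreal (L * T powr p) + ennreal (L * (T powr p / p))"
    if st: "0 < s" "s < t" "t < T" for s t
  proof -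
    have Hst: "holder_on {s..t} \<gamma> L g"
      using st by (auto intro: holder_on_subset[OF H])
    have tsT: "(t - s) powr p \<le> T powr p"
      using st p by (intro powr_mono2) auto
    have "norm (g t - g s) / (t - s) powr (1 - \<alpha>) \<le> L * (t - s) powr p"
      using holder_on_quotient_le[OF Hst, of s t "1 - \<alpha>"] st by (simp add: p_def)
    also have "\<dots> \<le> L * T powr p"
      using tsT L by (rule mult_left_mono)
    finally have quot: "norm (g t - g s) / (t - s) powr (1 - \<alpha>) \<le> L * T powr p" .
    have "(\<integral>\<^sup>+ y \<in> {s..t}. ennreal (norm (g y - g s) / (y - s) powr (2 - \<alpha>)) \<partial>lborel)
        \<le> ennreal (L * ((t - s) powr p / p))"
      using holder_weighted_nn_integral_le[OF Hst _ L \<gamma>] st by (simp add: p_def)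
    also have "\<dots> \<le> ennreal (L * (T powr p / p))"
      using tsT p L by (intro ennreal_leI mult_left_mono divide_right_mono) auto
    finally show ?thesis
      using quot by (auto intro: add_mono ennreal_leI)
  qed
  show ?thesis
    unfolding W_space_def using meas pair
    by (intro conjI order.strict_trans1[OF SUP_least, of _ _ "ennreal (L * T powr p) + ennreal (L * (T powr p / p))"])
      auto
qed

section \<open>Piecewise linear interpolation\<close>

lemma divide_mult_powr_le_powr:
  fixes d h \<beta> :: real
  assumes "0 \<le> d" "d \<le> h" "0 < \<beta>" "\<beta> \<le> 1"
  shows "d / h * h powr \<beta> \<le> d powr \<beta>"
proof (cases "d = 0")
  case False
  then have "0 < h"
    using assms by linarith
  then have x: "0 \<le> d / h" "d / h \<le> 1"
    using assms by auto
  have "d / h = (d / h) powr 1"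
    using x False assms by simp
  also have "\<dots> \<le> (d / h) powr \<beta>"
    using x assms by (intro powr_mono') auto
  finally have "d / h * h powr \<beta> \<le> (d / h) powr \<beta> * h powr \<beta>"
    by (intro mult_right_mono) auto
  also have "\<dots> = d powr \<beta>"
    using assms False by (simp add: powr_divide)
  finally show ?thesis .
qed simp

lemma grid_mono:
  fixes n :: nat
  assumes "a \<le> b" "T > 0"
  shows "real a * T / n \<le> real b * T / n"
  using assms by (intro divide_right_mono mult_right_mono) auto

lemma grid_le:
  fixes n :: nat
  assumes "k \<le> n" "n > 0" "T > 0"
  shows "real k * T / n \<le> T"
  using grid_mono[OF assms(1,3), of n] assms(2) by simp

lemma grid_cell_exists:
  assumes T: "T > 0" and n: "n \<ge> 1" and t: "0 < t" "t \<le> T"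
  shows "\<exists>k<n. real k * T / n < t \<and> t \<le> real (k+1) * T / n"
proof -
  define k where "k = nat (\<lceil>t * n / T\<rceil> - 1)"
  have c1: "\<lceil>t * n / T\<rceil> \<ge> 1"
    using T n t by (simp add: zero_less_mult_iff)
  have kk: "real k = of_int \<lceil>t * n / T\<rceil> - 1"
    using c1 unfolding k_def by simp
  have a: "real k < t * n / T" and b: "t * n / T \<le> real k + 1"
    using kk by linarith+
  have "t * n / T \<le> n"
    using t T n by (simp add: field_simps mult_right_mono)
  then have "k < n"
    using a by linarith
  moreover have "real k * T / n < t"
    using a T n by (simp add: field_simps)
  moreover have "t \<le> real (k+1) * T / n"
    using b T n by (simp add: field_simps)
  ultimately show ?thesis by blast
qed

lemma interp_eq_on_cell:
  fixes f :: "real \<Rightarrow> real ^ 'm::finite"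
  assumes T: "T > 0" and k: "k < n" and t: "real k * T / n < t" "t \<le> real (k+1) * T / n"
  shows "interp T n f t = f (real k * T / n)
           + ((t - real k * T / n) / (T / n)) *\<^sub>R (f (real (k+1) * T / n) - f (real k * T / n))"
proof -
  have ind: "indicator {real j * T / n <.. real (j+1) * T / n} t = (if j = k then 1 else (0::real))" for j
  proof (cases "j < k")
    case True
    then show ?thesis
      using t grid_mono[of "j+1" k T n] T by (auto simp: indicator_def)
  next
    case False
    then show ?thesis
      using t grid_mono[of "k+1" j T n] T by (auto simp: indicator_def)
  qed
  show ?thesis
    unfolding interp_def ind using k by (simp add: if_distrib[of "\<lambda>c. c *\<^sub>R _"] ac_simps cong: if_cong)
qed

lemma interp_measurable:
  fixes f :: "real \<Rightarrow> real ^ 'm::finite"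
  shows "interp T n f \<in> borel_measurable lborel"
  unfolding interp_def by measurable

lemma interp_near_nodes:
  fixes f :: "real \<Rightarrow> real ^ 'm::finite"
  assumes T: "T > 0" and k: "k < n" and t: "real k * T / n < t" "t \<le> real (k+1) * T / n"
    and H: "holder_on {0..T} \<beta> K f" and \<beta>: "0 < \<beta>" "\<beta> \<le> 1" and K: "K \<ge> 0"
  shows "norm (interp T n f t - f (real k * T / n)) \<le> K * (t - real k * T / n) powr \<beta>"
    and "norm (interp T n f t - f (real (k+1) * T / n)) \<le> K * (real (k+1) * T / n - t) powr \<beta>"
proof -
  define a where "a = real k * T / n"
  define b where "b = real (k+1) * T / n"
  define h where "h = T / n"
  have h: "h > 0" and ba: "b - a = h"
    using T k by (auto simp: a_def b_def h_def field_simps)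
  have ta: "a < t" "t \<le> b"
    using t by (auto simp: a_def b_def)
  have fD: "norm (f b - f a) \<le> K * h powr \<beta>"
    using holder_onD[OF H, of a b] grid_le[of "k+1" n T] T k ba h by (auto simp: a_def b_def)
  have ie: "interp T n f t = f a + ((t - a) / h) *\<^sub>R (f b - f a)"
    using interp_eq_on_cell[OF T k t] unfolding a_def b_def h_def .
  have "norm (interp T n f t - f a) = (t - a) / h * norm (f b - f a)"
    using ie ta h by simp
  also have "\<dots> \<le> K * ((t - a) / h * h powr \<beta>)"
    using ta h mult_left_mono[OF fD, of "(t - a) / h"] by (simp add: ac_simps)
  also have "\<dots> \<le> K * (t - a) powr \<beta>"
    using ta ba \<beta> K by (intro mult_left_mono divide_mult_powr_le_powr) auto
  finally show "norm (interp T n f t - f (real k * T / n)) \<le> K * (t - real k * T / n) powr \<beta>"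
    by (simp add: a_def)
  have "interp T n f t - f b = ((t - a) / h - 1) *\<^sub>R (f b - f a)"
    using ie by (simp add: algebra_simps)
  also have "(t - a) / h - 1 = - ((b - t) / h)"
    using ba h by (simp add: field_simps)
  finally have "norm (interp T n f t - f b) = (b - t) / h * norm (f b - f a)"
    using ta h by simp
  also have "\<dots> \<le> K * ((b - t) / h * h powr \<beta>)"
    using ta h mult_left_mono[OF fD, of "(b - t) / h"] by (simp add: ac_simps)
  also have "\<dots> \<le> K * (b - t) powr \<beta>"
    using ta ba \<beta> K by (intro mult_left_mono divide_mult_powr_le_powr) auto
  finally show "norm (interp T n f t - f (real (k+1) * T / n)) \<le> K * (real (k+1) * T / n - t) powr \<beta>"
    by (simp add: b_def)
qed

lemma interp_increment_within_cell:
  fixes f :: "real \<Rightarrow> real ^ 'm::finite"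
  assumes T: "T > 0" and k: "k < n" and cell: "real k * T / n < s" "s \<le> t" "t \<le> real (k+1) * T / n"
    and H: "holder_on {0..T} \<beta> K f" and \<beta>: "0 < \<beta>" "\<beta> \<le> 1" and K: "K \<ge> 0"
  shows "norm (interp T n f t - interp T n f s) \<le> K * (t - s) powr \<beta>"
proof -
  define a where "a = real k * T / n"
  define b where "b = real (k+1) * T / n"
  define h where "h = T / n"
  have h: "h > 0" and ba: "b - a = h"
    using T k by (auto simp: a_def b_def h_def field_simps)
  have fD: "norm (f b - f a) \<le> K * h powr \<beta>"
    using holder_onD[OF H, of a b] grid_le[of "k+1" n T] T k ba h by (auto simp: a_def b_def)
  have "interp T n f t - interp T n f s = ((t - a) / h - (s - a) / h) *\<^sub>R (f b - f a)"
    using interp_eq_on_cell[OF T k, of t f] interp_eq_on_cell[OF T k, of s f] cell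
    unfolding a_def b_def h_def by (simp add: scaleR_diff_left)
  also have "(t - a) / h - (s - a) / h = (t - s) / h"
    by (simp add: diff_divide_distrib)
  finally have "norm (interp T n f t - interp T n f s) = (t - s) / h * norm (f b - f a)"
    using cell h by simp
  also have "\<dots> \<le> K * ((t - s) / h * h powr \<beta>)"
    using cell h mult_left_mono[OF fD, of "(t - s) / h"] by (simp add: ac_simps)
  also have "\<dots> \<le> K * (t - s) powr \<beta>"
    using cell ba \<beta> K by (intro mult_left_mono divide_mult_powr_le_powr) (auto simp: a_def b_def)
  finally show ?thesis .
qed

text \<open>The cells \<open>(t\<^sub>k, t\<^bsub>k+1\<^esub>]\<close> are open on the left, so \<open>interp T n f 0 = 0\<close>; hence the
  Holder bounds for the interpolation hold on \<open>{0<..T}\<close> only.\<close>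

lemma holder_on_interp:
  fixes f :: "real \<Rightarrow> real ^ 'm::finite"
  assumes T: "T > 0" and n: "n \<ge> 1"
    and H: "holder_on {0..T} \<beta> K f" and \<beta>: "0 < \<beta>" "\<beta> \<le> 1" and K: "K \<ge> 0"
  shows "holder_on {0<..T} \<beta> (3 * K) (interp T n f)"
proof (rule holder_onI)
  fix s t assume s: "s \<in> {0<..T}" and t: "t \<in> {0<..T}" and st: "s \<le> t"
  obtain j where j: "j < n" "real j * T / n < s" "s \<le> real (j+1) * T / n"
    using grid_cell_exists[OF T n, of s] s by auto
  obtain k where k: "k < n" "real k * T / n < t" "t \<le> real (k+1) * T / n"
    using grid_cell_exists[OF T n, of t] t by auto
  have "j \<le> k"
    using grid_mono[of "k+1" j T n] T j k st by (cases "j \<le> k") auto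
  then consider "j = k" | "j + 1 \<le> k"
    by linarith
  then show "norm (interp T n f t - interp T n f s) \<le> 3 * K * (t - s) powr \<beta>"
  proof cases
    case 1
    then have "norm (interp T n f t - interp T n f s) \<le> K * (t - s) powr \<beta>"
      using interp_increment_within_cell[OF T k(1) _ st k(3) H \<beta> K] j by simp
    also have "\<dots> \<le> 3 * K * (t - s) powr \<beta>"
      using K by simp
    finally show ?thesis .
  next
    case 2
    define a where "a = real (j+1) * T / n"
    define b where "b = real k * T / n"
    have sab: "s \<le> a" "a \<le> b" "b < t" "0 \<le> a" "b \<le> T"
      using j k grid_mono[OF 2 T, of n] grid_le[of k n T] T by (auto simp: a_def b_def)
    have dist: "K * d powr \<beta> \<le> K * (t - s) powr \<beta>" if "0 \<le> d" "d \<le> t - s" for d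
      using that K \<beta> by (intro mult_left_mono powr_mono2) auto
    have "interp T n f t - interp T n f s = (interp T n f t - f b) + (f b - f a) + (f a - interp T n f s)"
      by simp
    then have "norm (interp T n f t - interp T n f s)
        \<le> norm (interp T n f t - f b) + norm (f b - f a) + norm (interp T n f s - f a)"
      using norm_triangle_ineq[of "interp T n f t - f b" "f b - f a"]
        norm_triangle_ineq[of "(interp T n f t - f b) + (f b - f a)" "f a - interp T n f s"]
      by (simp add: norm_minus_commute)
    also have "\<dots> \<le> K * (t - s) powr \<beta> + K * (t - s) powr \<beta> + K * (t - s) powr \<beta>"
    proof (intro add_mono)
      show "norm (interp T n f t - f b) \<le> K * (t - s) powr \<beta>"
        using interp_near_nodes(1)[OF T k H \<beta> K] dist[of "t - b"] sab by (simp add: b_def)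
      show "norm (f b - f a) \<le> K * (t - s) powr \<beta>"
        using holder_onD[OF H, of a b] dist[of "b - a"] sab by simp
      show "norm (interp T n f s - f a) \<le> K * (t - s) powr \<beta>"
        using interp_near_nodes(2)[OF T j H \<beta> K] dist[of "a - s"] sab by (simp add: a_def)
    qed
    finally show ?thesis
      by simp
  qed
qed

lemma interp_error_le:
  fixes f :: "real \<Rightarrow> real ^ 'm::finite"
  assumes T: "T > 0" and n: "n \<ge> 1"
    and H: "holder_on {0..T} \<beta> K f" and \<beta>: "0 < \<beta>" "\<beta> \<le> 1" and K: "K \<ge> 0"
    and t: "t \<in> {0<..T}"
  shows "norm (interp T n f t - f t) \<le> 2 * K * (T / n) powr \<beta>"
proof -
  obtain k where k: "k < n" "real k * T / n < t" "t \<le> real (k+1) * T / n"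
    using grid_cell_exists[OF T n, of t] t by auto
  define a where "a = real k * T / n"
  have "real (k+1) * T / n - a = T / n"
    using n by (simp add: a_def field_simps)
  then have d: "0 \<le> t - a" "t - a \<le> T / n"
    using k by (auto simp: a_def)
  have le: "K * (t - a) powr \<beta> \<le> K * (T / n) powr \<beta>"
    using K \<beta> d by (intro mult_left_mono powr_mono2) auto
  have "norm (interp T n f t - f t) \<le> norm (interp T n f t - f a) + norm (f t - f a)"
    using norm_triangle_ineq4[of "interp T n f t - f a" "f t - f a"] by simp
  also have "\<dots> \<le> K * (T / n) powr \<beta> + K * (T / n) powr \<beta>"
    using interp_near_nodes(1)[OF T k H \<beta> K] holder_onD[OF H, of a t] t d le
    by (intro add_mono) (auto simp: a_def)
  finally show ?thesis
    by simp
qed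

lemma holder_on_interp_error:
  fixes f :: "real \<Rightarrow> real ^ 'm::finite"
  assumes T: "T > 0" and n: "n \<ge> 1"
    and H: "holder_on {0..T} \<beta> K f" and \<beta>: "0 < \<beta>" "\<beta> \<le> 1" and K: "K \<ge> 0"
    and \<beta>': "0 < \<beta>'" "\<beta>' \<le> \<beta>"
  shows "holder_on {0<..T} \<beta>' (4 * K * (T / n) powr (\<beta> - \<beta>')) (\<lambda>t. interp T n f t - f t)"
proof (rule holder_onI)
  fix s t assume s: "s \<in> {0<..T}" and t: "t \<in> {0<..T}" and st: "s \<le> t"
  define h where "h = T / n"
  have h: "h > 0"
    using T n by (simp add: h_def)
  let ?g = "\<lambda>t. interp T n f t - f t"
  have near: "norm (?g t - ?g s) \<le> 4 * K * (t - s) powr \<beta>"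
  proof -
    have "norm (?g t - ?g s) \<le> norm (interp T n f t - interp T n f s) + norm (f t - f s)"
      using norm_triangle_ineq4[of "interp T n f t - interp T n f s" "f t - f s"] by (simp add: algebra_simps)
    also have "\<dots> \<le> 3 * K * (t - s) powr \<beta> + K * (t - s) powr \<beta>"
      using holder_onD[OF holder_on_interp[OF T n H \<beta> K] s t] holder_onD[OF H, of s t] s t st
      by (intro add_mono) auto
    finally show ?thesis
      by simp
  qed
  have far: "norm (?g t - ?g s) \<le> 4 * K * h powr \<beta>"
    using norm_triangle_ineq4[of "?g t" "?g s"] interp_error_le[OF T n H \<beta> K s] interp_error_le[OF T n H \<beta> K t]
    by (simp add: h_def)
  have split: "x powr \<beta> = x powr \<beta>' * x powr (\<beta> - \<beta>')" for x :: real
    by (simp add: powr_add[symmetric])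
  show "norm (?g t - ?g s) \<le> 4 * K * (T / n) powr (\<beta> - \<beta>') * (t - s) powr \<beta>'"
  proof (cases "t - s \<le> h")
    case True
    then have pw: "(t - s) powr \<beta> \<le> (t - s) powr \<beta>' * h powr (\<beta> - \<beta>')"
      unfolding split using st \<beta>' by (intro mult_left_mono powr_mono2) auto
    have "4 * K * (t - s) powr \<beta> \<le> 4 * K * h powr (\<beta> - \<beta>') * (t - s) powr \<beta>'"
      using mult_left_mono[OF pw, of "4 * K"] K by (simp add: mult_ac)
    then show ?thesis
      using near unfolding h_def by linarith
  next
    case False
    then have pw: "h powr \<beta> \<le> (t - s) powr \<beta>' * h powr (\<beta> - \<beta>')"
      unfolding split using h \<beta>' by (intro mult_right_mono powr_mono2) auto
    have "4 * K * h powr \<beta> \<le> 4 * K * h powr (\<beta> - \<beta>') * (t - s) powr \<beta>'"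
      using mult_left_mono[OF pw, of "4 * K"] K by (simp add: mult_ac)
    then show ?thesis
      using far unfolding h_def by linarith
  qed
qed

lemma interp_Lambda_bounds_if_holder:
  fixes f :: "real \<Rightarrow> real ^ 'm::finite"
  assumes \<alpha>: "0 < \<alpha>" "\<alpha> < 1" and \<beta>: "1 - \<alpha> < \<beta>'" "\<beta>' < \<beta>" "\<beta> \<le> 1"
    and T: "T > 0" and K: "K \<ge> 0" and H: "holder_on {0..T} \<beta> K f"
  shows "(\<forall>n\<ge>1. W_space \<alpha> T (interp T n f) \<and> W_space \<alpha> T (\<lambda>t. interp T n f t - f t)) \<and>
     (SUP n\<in>{1..}. Lambda \<alpha> T (interp T n f)) < \<infinity> \<and>
     (\<lambda>n. Lambda \<alpha> T (\<lambda>t. interp T n f t - f t)) \<longlonglongrightarrow> 0"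
proof -
  have \<beta>0: "0 < \<beta>'" "0 < \<beta>"
    using \<alpha> \<beta> by auto
  have fm: "f \<in> borel_measurable (restrict_space lborel {0..T})"
    using holder_on_imp_continuous_on[OF H \<beta>0(2)] by (rule borel_measurable_restrict_lborel_if_continuous_on)
  have im: "interp T n f \<in> borel_measurable (restrict_space lborel {0..T})" for n
    by (rule measurable_restrict_space1[OF interp_measurable])
  have dm: "(\<lambda>t. interp T n f t - f t) \<in> borel_measurable (restrict_space lborel {0..T})" for n
    using im[of n] fm by measurable
  have Hi: "holder_on {0<..<T} \<beta> (3 * K) (interp T n f)" if "n \<ge> 1" for n
    by (rule holder_on_subset[OF holder_on_interp[OF T that H \<beta>0(2) \<beta>(3) K]]) auto
  have Hd: "holder_on {0<..<T} \<beta>' (4 * K * (T / n) powr (\<beta> - \<beta>')) (\<lambda>t. interp T n f t - f t)"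
    if "n \<ge> 1" for n
    using \<beta> by (intro holder_on_subset[OF holder_on_interp_error[OF T that H \<beta>0(2) \<beta>(3) K \<beta>0(1)]]) auto
  have K3: "3 * K \<ge> 0" and K4: "4 * K * (T / n) powr (\<beta> - \<beta>') \<ge> 0" for n :: nat
    using K by auto
  have \<beta>1: "1 - \<alpha> < \<beta>"
    using \<beta> by simp
  have "(SUP n\<in>{1..}. Lambda \<alpha> T (interp T n f)) \<le> ereal (holder_Lambda_const \<alpha> \<beta> T * (3 * K))"
    using Lambda_le_holder[OF Hi K3 \<alpha> \<beta>1] by (intro SUP_least) auto
  then have bounded: "(SUP n\<in>{1..}. Lambda \<alpha> T (interp T n f)) < \<infinity>"
    by (rule order.strict_trans1) simp
  have "(\<lambda>n. ereal (holder_Lambda_const \<alpha> \<beta>' T * (4 * K * (T / real n) powr (\<beta> - \<beta>'))))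
      \<longlonglongrightarrow> ereal (holder_Lambda_const \<alpha> \<beta>' T * (4 * K * 0))"
  proof (intro tendsto_ereal tendsto_mult tendsto_const)
    show "(\<lambda>n. (T / real n) powr (\<beta> - \<beta>')) \<longlonglongrightarrow> 0"
      by (rule tendsto_zero_powrI[OF lim_const_over_n tendsto_const]) (use T \<beta> in auto)
  qed
  then have tendsto: "(\<lambda>n. Lambda \<alpha> T (\<lambda>t. interp T n f t - f t)) \<longlonglongrightarrow> 0"
    unfolding mult_zero_right zero_ereal_def[symmetric]
  proof (rule tendsto_sandwich[OF _ _ tendsto_const, rotated 2])
    show "\<forall>\<^sub>F n in sequentially. 0 \<le> Lambda \<alpha> T (\<lambda>t. interp T n f t - f t)"
      using Lambda_nonneg[OF \<alpha>(2) T] by (intro always_eventually allI)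
    show "\<forall>\<^sub>F n in sequentially. Lambda \<alpha> T (\<lambda>t. interp T n f t - f t)
        \<le> ereal (holder_Lambda_const \<alpha> \<beta>' T * (4 * K * (T / real n) powr (\<beta> - \<beta>')))"
      using Lambda_le_holder[OF Hd K4 \<alpha> \<beta>(1)] by (intro eventually_sequentiallyI[of 1]) auto
  qed
  have "W_space \<alpha> T (interp T n f) \<and> W_space \<alpha> T (\<lambda>t. interp T n f t - f t)" if "n \<ge> 1" for n
    using W_space_if_holder[OF Hi[OF that] K3 \<beta>1 im] W_space_if_holder[OF Hd[OF that] K4 \<beta>(1) dm] by blast
  then show ?thesis
    using bounded tendsto by blast
qed

section \<open>Dyadic chaining\<close>

definition dyadic_floor :: "nat \<Rightarrow> real \<Rightarrow> real" where
  "dyadic_floor m x = of_int \<lfloor>2^m * x\<rfloor> / 2^m"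

lemma dyadic_floor_bounds:
  assumes "0 \<le> x"
  shows "0 \<le> dyadic_floor m x" "dyadic_floor m x \<le> x" "x - dyadic_floor m x < 1 / 2^m"
proof -
  have f1: "of_int \<lfloor>2^m * x\<rfloor> \<le> 2^m * x" and f2: "2^m * x < of_int \<lfloor>2^m * x\<rfloor> + 1"
    by linarith+
  show "0 \<le> dyadic_floor m x"
    unfolding dyadic_floor_def using assms by simp
  show "dyadic_floor m x \<le> x"
    unfolding dyadic_floor_def using f1 by (simp add: divide_le_eq mult.commute)
  have "x - dyadic_floor m x = (2^m * x - of_int \<lfloor>2^m * x\<rfloor>) / 2^m"
    unfolding dyadic_floor_def by (simp add: field_simps)
  also have "\<dots> < 1 / 2^m"
    using f2 by (intro divide_strict_right_mono) (auto simp: algebra_simps)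
  finally show "x - dyadic_floor m x < 1 / 2^m" .
qed

lemma dyadic_floor_tendsto:
  assumes "0 \<le> x"
  shows "(\<lambda>m. dyadic_floor m x) \<longlonglongrightarrow> x"
proof (rule tendsto_sandwich[of "\<lambda>m. x - (1/2)^m" _ _ "\<lambda>m. x"])
  show "\<forall>\<^sub>F m in sequentially. x - (1/2)^m \<le> dyadic_floor m x"
  proof (intro always_eventually allI)
    fix m
    show "x - (1/2)^m \<le> dyadic_floor m x"
      using dyadic_floor_bounds(3)[OF assms, of m] by (simp add: power_one_over)
  qed
  show "\<forall>\<^sub>F m in sequentially. dyadic_floor m x \<le> x"
    using dyadic_floor_bounds(2)[OF assms] by simp
  show "(\<lambda>m. x - (1/2::real)^m) \<longlonglongrightarrow> x"
    using tendsto_diff[OF tendsto_const LIMSEQ_power_zero[of "1/2::real"], of x] by simp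
qed simp

lemma dyadic_floor_Suc:
  assumes "0 \<le> x"
  shows "dyadic_floor (Suc m) x = dyadic_floor m x \<or>
    (\<exists>j::nat. dyadic_floor m x = real j / 2^Suc m \<and> dyadic_floor (Suc m) x = real (j+1) / 2^Suc m)"
proof -
  define a where "a = \<lfloor>2^m * x\<rfloor>"
  define b where "b = \<lfloor>2^Suc m * x\<rfloor>"
  have a0: "0 \<le> a"
    using assms by (simp add: a_def)
  have "of_int a \<le> 2^m * x" "2^m * x < of_int a + 1"
    unfolding a_def by linarith+
  then have "of_int (2 * a) \<le> 2^Suc m * x" "2^Suc m * x < of_int (2 * a + 2)"
    by simp_all
  moreover have "of_int b \<le> 2^Suc m * x"
    unfolding b_def by (rule of_int_floor_le)
  ultimately have "2 * a \<le> b" "of_int b < (of_int (2 * a + 2) :: real)"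
    unfolding b_def by (simp add: le_floor_iff, linarith)
  then have "2 * a \<le> b" "b < 2 * a + 2"
    by linarith+
  moreover have "dyadic_floor m x = of_int (2 * a) / 2^Suc m" "dyadic_floor (Suc m) x = of_int b / 2^Suc m"
    unfolding dyadic_floor_def a_def b_def by simp_all
  ultimately consider "dyadic_floor (Suc m) x = dyadic_floor m x"
    | "dyadic_floor m x = real (nat (2 * a)) / 2^Suc m \<and> dyadic_floor (Suc m) x = real (nat (2 * a) + 1) / 2^Suc m"
    using a0 by (cases "b = 2 * a") auto
  then show ?thesis
    by cases blast+
qed

lemma dyadic_floor_adjacent:
  assumes "0 \<le> y" "y \<le> x" "x - y \<le> 1 / 2^m"
  shows "dyadic_floor m x = dyadic_floor m y \<or>
    (\<exists>j::nat. dyadic_floor m y = real j / 2^m \<and> dyadic_floor m x = real (j+1) / 2^m)"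
proof -
  define a where "a = \<lfloor>2^m * x\<rfloor>"
  define b where "b = \<lfloor>2^m * y\<rfloor>"
  have "b \<le> a"
    unfolding a_def b_def using assms by (intro floor_mono) simp
  moreover have "2^m * x \<le> 2^m * y + 1"
    using assms by (simp add: field_simps)
  then have "a \<le> \<lfloor>2^m * y + 1\<rfloor>"
    unfolding a_def by (rule floor_mono)
  then have "a \<le> b + 1"
    unfolding b_def by simp
  moreover have "0 \<le> b"
    using assms unfolding b_def by simp
  ultimately consider "a = b" | "a = b + 1" "0 \<le> b"
    by linarith
  then show ?thesis
  proof cases
    case 2
    then have "dyadic_floor m y = real (nat b) / 2^m \<and> dyadic_floor m x = real (nat b + 1) / 2^m"
      unfolding dyadic_floor_def a_def b_def by simp
    then show ?thesis
      by blast
  qed (simp add: dyadic_floor_def a_def b_def)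
qed

lemma nat_less_pow2_if_dyadic_le_1:
  fixes j m :: nat
  assumes "real (j+1) / 2^m \<le> 1"
  shows "j < 2^m"
proof -
  have "real (j+1) \<le> real (2^m)"
    using assms by (simp add: divide_le_eq)
  then show ?thesis
    by linarith
qed

lemma dyadic_floor_Suc_increment_le:
  fixes f :: "real \<Rightarrow> 'b::real_normed_vector"
  assumes hyp: "\<forall>n\<ge>N. \<forall>j<2^n. norm (f (real (j+1) / 2^n) - f (real j / 2^n)) \<le> r^n"
    and r: "0 \<le> r" and x: "0 \<le> x" "x \<le> 1" and m: "N \<le> m"
  shows "norm (f (dyadic_floor (Suc m) x) - f (dyadic_floor m x)) \<le> r^Suc m"
  using dyadic_floor_Suc[OF x(1), of m]
proof
  assume "\<exists>j::nat. dyadic_floor m x = real j / 2^Suc m \<and> dyadic_floor (Suc m) x = real (j+1) / 2^Suc m"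
  then obtain j :: nat
    where j: "dyadic_floor m x = real j / 2^Suc m" "dyadic_floor (Suc m) x = real (j+1) / 2^Suc m"
    by blast
  have "j < 2^Suc m"
    using j(2) dyadic_floor_bounds(2)[OF x(1), of "Suc m"] x(2)
    by (intro nat_less_pow2_if_dyadic_le_1) linarith
  then show ?thesis
    unfolding j by (intro hyp[rule_format]) (use m in auto)
qed (use r in simp)

lemma dyadic_floor_increment_le:
  fixes f :: "real \<Rightarrow> 'b::real_normed_vector"
  assumes hyp: "\<forall>n\<ge>N. \<forall>j<2^n. norm (f (real (j+1) / 2^n) - f (real j / 2^n)) \<le> r^n"
    and C: "continuous_on {0..1} f" and r: "0 \<le> r" "r < 1"
    and x: "0 \<le> x" "x \<le> 1" and m: "N \<le> m"
  shows "norm (f x - f (dyadic_floor m x)) \<le> r^m / (1 - r)"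
proof -
  have partial: "norm (f (dyadic_floor (m + p) x) - f (dyadic_floor m x)) \<le> r^Suc m * (1 - r^p) / (1 - r)" for p
  proof (induction p)
    case (Suc p)
    have "norm (f (dyadic_floor (Suc (m + p)) x) - f (dyadic_floor m x))
        \<le> r^Suc (m + p) + r^Suc m * (1 - r^p) / (1 - r)"
      using dyadic_floor_Suc_increment_le[OF hyp r(1) x, of "m + p"] m Suc.IH
      by (intro norm_diff_triangle_le) auto
    also have "\<dots> = r^Suc m * (1 - r^Suc p) / (1 - r)"
      using r by (simp add: field_simps power_add)
    finally show ?case
      by simp
  qed simp
  have "r^Suc m * (1 - r^p) / (1 - r) \<le> r^m / (1 - r)" for p
  proof -
    have "r^Suc m * (1 - r^p) \<le> r^m * 1"
      using r by (intro mult_mono power_decreasing) (auto simp: power_le_one)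
    then show ?thesis
      using r by (intro divide_right_mono) auto
  qed
  then have "eventually (\<lambda>p. norm (f (dyadic_floor p x) - f (dyadic_floor m x)) \<le> r^m / (1 - r)) sequentially"
    using partial by (intro eventually_sequentiallyI[of m]) (metis le_add_diff_inverse order_trans)
  moreover have "dyadic_floor p x \<in> {0..1}" for p
    using dyadic_floor_bounds(1,2)[OF x(1), of p] x(2) by simp
  then have "(\<lambda>p. f (dyadic_floor p x)) \<longlonglongrightarrow> f x"
    using x by (intro continuous_on_tendsto_compose[OF C dyadic_floor_tendsto[OF x(1)]] always_eventually) auto
  ultimately show ?thesis
    by (intro tendsto_upperbound[OF tendsto_norm[OF tendsto_diff[OF _ tendsto_const]]]) auto
qed

lemma dyadic_floor_adjacent_increment_le:
  fixes f :: "real \<Rightarrow> 'b::real_normed_vector"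
  assumes hyp: "\<forall>n\<ge>N. \<forall>j<2^n. norm (f (real (j+1) / 2^n) - f (real j / 2^n)) \<le> r^n"
    and r: "0 \<le> r" and xy: "0 \<le> y" "y \<le> x" "x \<le> 1" "x - y \<le> 1 / 2^m" and m: "N \<le> m"
  shows "norm (f (dyadic_floor m x) - f (dyadic_floor m y)) \<le> r^m"
  using dyadic_floor_adjacent[OF xy(1,2,4)]
proof
  assume "\<exists>j::nat. dyadic_floor m y = real j / 2^m \<and> dyadic_floor m x = real (j+1) / 2^m"
  then obtain j :: nat where j: "dyadic_floor m y = real j / 2^m" "dyadic_floor m x = real (j+1) / 2^m"
    by blast
  have "j < 2^m"
    using j(2) dyadic_floor_bounds(2)[of x m] xy by (intro nat_less_pow2_if_dyadic_le_1) linarith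
  then show ?thesis
    unfolding j by (intro hyp[rule_format]) (use m in auto)
qed (use r in simp)

lemma increment_le_if_dyadic_increments:
  fixes f :: "real \<Rightarrow> 'b::real_normed_vector"
  assumes hyp: "\<forall>n\<ge>N. \<forall>j<2^n. norm (f (real (j+1) / 2^n) - f (real j / 2^n)) \<le> r^n"
    and C: "continuous_on {0..1} f" and r: "0 \<le> r" "r < 1"
    and xy: "0 \<le> y" "y \<le> x" "x \<le> 1" "x - y \<le> 1 / 2^m" and m: "N \<le> m"
  shows "norm (f x - f y) \<le> r^m * (1 + 2 / (1 - r))"
proof -
  have "norm (f x - f y)
      \<le> norm (f x - f (dyadic_floor m x)) + norm (f (dyadic_floor m x) - f (dyadic_floor m y))
         + norm (f y - f (dyadic_floor m y))"
    by (metis norm_diff_triangle_le norm_minus_commute order_refl)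
  also have "\<dots> \<le> r^m / (1 - r) + r^m + r^m / (1 - r)"
    using dyadic_floor_increment_le[OF hyp C r, of x m] dyadic_floor_increment_le[OF hyp C r, of y m]
      dyadic_floor_adjacent_increment_le[OF hyp r(1) xy m] xy m
    by (intro add_mono) auto
  also have "\<dots> = r^m * (1 + 2 / (1 - r))"
    by (simp add: distrib_left)
  finally show ?thesis .
qed

lemma power_powr_swap:
  fixes x :: real
  assumes "0 < x"
  shows "(x powr \<beta>) ^ m = (x ^ m) powr \<beta>"
  using assms by (simp add: powr_power powr_powr powr_realpow[symmetric] mult.commute)

lemma half_power_bracket:
  fixes d :: real
  assumes "0 < d" "d \<le> (1/2)^N"
  obtains m where "N \<le> m" "(1/2)^Suc m < d" "d \<le> (1/2)^m"
proof -
  have "\<exists>n. (1/2::real)^n < d"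
    using real_arch_pow_inv[OF assms(1), of "1/2"] by simp
  moreover have "(1/2::real)^N \<le> 1"
    by (rule power_le_one) auto
  then have "\<not> (1/2::real)^0 < d"
    using assms by simp
  ultimately obtain m where m: "\<not> (1/2::real)^m < d" "(1/2::real)^Suc m < d"
    using exists_least_lemma[of "\<lambda>n. (1/2::real)^n < d"] by blast
  have "N \<le> m"
  proof (rule ccontr)
    assume "\<not> N \<le> m"
    then have "(1/2::real)^N \<le> (1/2)^Suc m"
      by (intro power_decreasing) auto
    then show False
      using m(2) assms(2) by simp
  qed
  then show ?thesis
    using that m by simp
qed

lemma holder_on_if_dyadic_increments:
  fixes f :: "real \<Rightarrow> 'b::real_normed_vector"
  assumes C: "continuous_on {0..1} f" and \<beta>: "0 < \<beta>"
    and hyp: "\<forall>n\<ge>N. \<forall>j<2^n. norm (f (real (j+1) / 2^n) - f (real j / 2^n)) \<le> ((1/2) powr \<beta>)^n"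
  shows "\<exists>K. holder_on {0..1} \<beta> K f"
proof -
  define r where "r = (1/2::real) powr \<beta>"
  have r: "0 \<le> r" "r < 1"
    using powr_less_mono2[OF \<beta>, of "1/2" 1] by (auto simp: r_def)
  obtain M where M: "\<And>x. x \<in> {0..1} \<Longrightarrow> norm (f x) \<le> M"
    using compact_imp_bounded[OF compact_continuous_image[OF C compact_Icc]]
    unfolding bounded_iff by force
  define c where "c = ((1/2::real)^N) powr \<beta>"
  have c: "c > 0"
    by (simp add: c_def)
  define K where "K = (1 + 2 / (1 - r)) * 2 powr \<beta> + 2 * M / c"
  have "0 \<le> M"
    using M[of 0] by (auto intro: order_trans[OF norm_ge_zero])
  then have K1: "0 \<le> (1 + 2 / (1 - r)) * 2 powr \<beta>" and K2: "0 \<le> 2 * M / c"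
    using r c by auto
  show ?thesis
  proof (intro exI holder_onI)
    fix y x :: real assume y: "y \<in> {0..1}" and x: "x \<in> {0..1}" and yx: "y \<le> x"
    consider "x = y" | "0 < x - y" "x - y \<le> (1/2)^N" | "(1/2)^N < x - y"
      using yx by fastforce
    then show "norm (f x - f y) \<le> K * (x - y) powr \<beta>"
    proof cases
      case 2
      then obtain m where m: "N \<le> m" "(1/2)^Suc m < x - y" "x - y \<le> (1/2)^m"
        by (rule half_power_bracket)
      have "r^m = ((1/2::real)^m) powr \<beta>"
        unfolding r_def by (simp add: power_powr_swap)
      also have "\<dots> \<le> (2 * (x - y)) powr \<beta>"
        using m(2) \<beta> by (intro powr_mono2) auto
      also have "\<dots> = 2 powr \<beta> * (x - y) powr \<beta>"
        using 2 by (subst powr_mult) auto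
      finally have rm: "r^m \<le> 2 powr \<beta> * (x - y) powr \<beta>" .
      have "norm (f x - f y) \<le> r^m * (1 + 2 / (1 - r))"
        by (rule increment_le_if_dyadic_increments[OF hyp[folded r_def] C r])
          (use x y yx m in \<open>auto simp: power_one_over\<close>)
      also have "\<dots> \<le> 2 powr \<beta> * (x - y) powr \<beta> * (1 + 2 / (1 - r))"
        using rm r by (intro mult_right_mono) auto
      also have "\<dots> = (1 + 2 / (1 - r)) * 2 powr \<beta> * (x - y) powr \<beta>"
        by (simp only: mult_ac)
      also have "\<dots> \<le> K * (x - y) powr \<beta>"
        unfolding K_def using K2 by (intro mult_right_mono) auto
      finally show ?thesis .
    next
      case 3
      have "norm (f x - f y) \<le> 2 * M"
        using M[OF x] M[OF y] norm_triangle_ineq4[of "f x" "f y"] by simp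
      also have "\<dots> = 2 * M / c * c"
        using c by simp
      also have "\<dots> \<le> 2 * M / c * (x - y) powr \<beta>"
        using mult_left_mono[OF _ K2, of c "(x - y) powr \<beta>"] 3 \<beta> by (simp add: c_def powr_mono2)
      also have "\<dots> \<le> K * (x - y) powr \<beta>"
        unfolding K_def using K1 by (intro mult_right_mono) auto
      finally show ?thesis .
    qed simp
  qed
qed

section \<open>Holder continuity of fractional Brownian motion\<close>

lemma normal_tail_le_even_moment:
  assumes P: "prob_space M" and D: "distributed M lborel X (\<lambda>x. ennreal (normal_density 0 \<sigma> x))"
    and \<delta>: "\<delta> > 0" and \<sigma>: "\<sigma> > 0"
  shows "measure M {\<omega>\<in>space M. \<delta> \<le> \<bar>X \<omega>\<bar>} \<le> fact (2*k) / (2^k * fact k) * \<sigma>^(2*k) / \<delta>^(2*k)"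
proof -
  interpret prob_space M
    by (rule P)
  define A where "A = {x::real. \<delta> \<le> \<bar>x\<bar>}"
  define C where "C = fact (2*k) / (2^k * fact k) * \<sigma>^(2*k) / \<delta>^(2*k)"
  have "integrable lborel (\<lambda>x. normal_density 0 \<sigma> x * (x - 0)^(2*k))"
    using \<sigma> by (rule integrable_normal_moment)
  then have int: "integrable lborel (\<lambda>x. normal_density 0 \<sigma> x * x^(2*k) / \<delta>^(2*k))"
    by simp
  have "(\<integral>x. normal_density 0 \<sigma> x * x^(2*k) / \<delta>^(2*k) \<partial>lborel)
      = (\<integral>x. normal_density 0 \<sigma> x * (x - 0)^(2*k) \<partial>lborel) / \<delta>^(2*k)"
    by simp
  also have "\<dots> = fact (2*k) / ((2 / \<sigma>\<^sup>2)^k * fact k) / \<delta>^(2*k)"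
    using \<sigma> by (simp only: integral_normal_moment_even)
  also have "\<dots> = C"
    using \<sigma> unfolding C_def power_mult by (simp add: power_divide)
  finally have ival: "(\<integral>x. normal_density 0 \<sigma> x * x^(2*k) / \<delta>^(2*k) \<partial>lborel) = C" .
  have "A \<in> sets borel"
    unfolding A_def by measurable
  moreover have "{\<omega>\<in>space M. \<delta> \<le> \<bar>X \<omega>\<bar>} = X -` A \<inter> space M"
    unfolding A_def by auto
  ultimately have "emeasure M {\<omega>\<in>space M. \<delta> \<le> \<bar>X \<omega>\<bar>}
      = (\<integral>\<^sup>+x. ennreal (normal_density 0 \<sigma> x) * indicator A x \<partial>lborel)"
    using distributed_emeasure[OF D] by simp
  also have "\<dots> \<le> (\<integral>\<^sup>+x. ennreal (normal_density 0 \<sigma> x * x^(2*k) / \<delta>^(2*k)) \<partial>lborel)"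
  proof (intro nn_integral_mono)
    fix x :: real
    show "ennreal (normal_density 0 \<sigma> x) * indicator A x \<le> ennreal (normal_density 0 \<sigma> x * x^(2*k) / \<delta>^(2*k))"
    proof (cases "x \<in> A")
      case True
      then have "\<delta>^(2*k) \<le> x^(2*k)"
        using \<delta> power_mono[of \<delta> "\<bar>x\<bar>" "2*k"] unfolding A_def by (simp add: power_even_abs)
      then have "normal_density 0 \<sigma> x * 1 \<le> normal_density 0 \<sigma> x * (x^(2*k) / \<delta>^(2*k))"
        using \<delta> by (intro mult_left_mono) auto
      then show ?thesis
        using True by (simp add: ennreal_leI)
    qed simp
  qed
  also have "\<dots> = ennreal C"
    using int ival by (subst nn_integral_eq_integral) auto
  finally show ?thesis
    unfolding C_def[symmetric] using \<delta> \<sigma> by (simp add: emeasure_eq_measure C_def)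
qed

lemma fbm_cov_increment_variance:
  assumes "0 \<le> s" "0 \<le> t"
  shows "fbm_cov H t t - fbm_cov H t s - fbm_cov H s t + fbm_cov H s s = \<bar>t - s\<bar> powr (2*H)"
  using assms unfolding fbm_cov_def by (simp add: abs_minus_commute field_simps)

lemma fbm_increment_distributed:
  fixes B :: "real \<Rightarrow> 'a \<Rightarrow> real ^ 'm::finite"
  assumes B: "is_fbm M H T B" and s: "s \<in> {0..T}" and t: "t \<in> {0..T}" and st: "s \<noteq> t"
  shows "distributed M lborel (\<lambda>\<omega>. B t \<omega> $ i - B s \<omega> $ i)
           (\<lambda>x. ennreal (normal_density 0 (\<bar>t - s\<bar> powr H) x))"
proof -
  define ts where "ts = (\<lambda>j::nat. if j = 0 then t else s)"
  define c where "c = (\<lambda>(j::nat) (i'::'m). if i' = i then (if j = 0 then 1 else -1) else (0::real))"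
  have "centered_gaussian M (\<lambda>\<omega>. \<Sum>j<2. \<Sum>i'\<in>UNIV. c j i' * (B (ts j) \<omega> $ i'))
          (\<Sum>j<2. \<Sum>k<2. \<Sum>i'\<in>UNIV. c j i' * c k i' * fbm_cov H (ts j) (ts k))"
    using B s t unfolding is_fbm_def ts_def by (simp add: less_2_cases_iff)
  moreover have "(\<lambda>\<omega>. \<Sum>j<2. \<Sum>i'\<in>UNIV. c j i' * (B (ts j) \<omega> $ i')) = (\<lambda>\<omega>. B t \<omega> $ i - B s \<omega> $ i)"
    by (simp add: c_def ts_def numeral_2_eq_2 if_distrib[of "\<lambda>z. z * _"] cong: if_cong)
  moreover have "(\<Sum>j<2. \<Sum>k<2. \<Sum>i'\<in>UNIV. c j i' * c k i' * fbm_cov H (ts j) (ts k))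
      = fbm_cov H t t - fbm_cov H t s - fbm_cov H s t + fbm_cov H s s"
    by (simp add: c_def ts_def numeral_2_eq_2 if_distrib[of "\<lambda>z. z * _"] cong: if_cong)
  ultimately have "centered_gaussian M (\<lambda>\<omega>. B t \<omega> $ i - B s \<omega> $ i) (\<bar>t - s\<bar> powr (2*H))"
    using fbm_cov_increment_variance[of s t H] s t by simp
  moreover have "sqrt (\<bar>t - s\<bar> powr (2*H)) = \<bar>t - s\<bar> powr H"
    by (simp add: powr_half_sqrt[symmetric] powr_powr)
  ultimately show ?thesis
    using st unfolding centered_gaussian_def by auto
qed

lemma scaled_dyadic_in_interval:
  fixes j n :: nat
  assumes "j \<le> 2^n" "T \<ge> 0"
  shows "T * (real j / 2^n) \<in> {0..T}"
proof -
  have "real j / 2^n \<le> 1"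
    using assms(1) by (simp add: divide_le_eq)
  then show ?thesis
    using assms(2) mult_left_le[of "real j / 2^n" T] by simp
qed

lemma fbm_increment_tail:
  fixes B :: "real \<Rightarrow> 'a \<Rightarrow> real ^ 'm::finite"
  assumes B: "is_fbm M H T B" and s: "s \<in> {0..T}" and t: "t \<in> {0..T}" and st: "s \<noteq> t"
    and \<delta>: "\<delta> > 0"
  shows "measure M {\<omega>\<in>space M. \<delta> \<le> \<bar>B t \<omega> $ i - B s \<omega> $ i\<bar>}
           \<le> fact (2*k) / (2^k * fact k) * \<bar>t - s\<bar> powr (2*H*k) / \<delta>^(2*k)"
proof -
  have "prob_space M"
    using B unfolding is_fbm_def by blast
  moreover have "(\<bar>t - s\<bar> powr H)^(2*k) = \<bar>t - s\<bar> powr (2*H*k)"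
    using st by (simp add: powr_power mult_ac)
  ultimately show ?thesis
    using normal_tail_le_even_moment[OF _ fbm_increment_distributed[OF B s t st] \<delta>, where k=k] st by simp
qed

lemma fbm_dyadic_increment_tail:
  fixes B :: "real \<Rightarrow> 'a \<Rightarrow> real ^ 'm::finite"
  assumes B: "is_fbm M H T B" and T: "T > 0" and j: "j < 2^n"
  shows "measure M {\<omega>\<in>space M.
           ((1/2) powr \<beta>)^n \<le> \<bar>B (T * (real (j+1) / 2^n)) \<omega> $ i - B (T * (real j / 2^n)) \<omega> $ i\<bar>}
     \<le> fact (2*k) / (2^k * fact k) * T powr (2*H*k) * ((1/2) powr (2*k*(H - \<beta>)))^n"
proof -
  define u where "u = (1/2::real)^n"
  define C :: real where "C = fact (2*k) / (2^k * fact k)"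
  have u: "u > 0"
    by (simp add: u_def)
  then have \<delta>: "u powr \<beta> > 0"
    by simp
  have \<delta>_eq: "((1/2) powr \<beta>)^n = u powr \<beta>"
    unfolding u_def by (simp add: power_powr_swap)
  have dist: "\<bar>T * (real (j+1) / 2^n) - T * (real j / 2^n)\<bar> = T * u"
    using T by (simp add: u_def field_simps power_one_over)
  have tT: "T * (real (j+1) / 2^n) \<in> {0..T}" and sT: "T * (real j / 2^n) \<in> {0..T}"
    using j T by (intro scaled_dyadic_in_interval; simp)+
  have "measure M {\<omega>\<in>space M.
           u powr \<beta> \<le> \<bar>B (T * (real (j+1) / 2^n)) \<omega> $ i - B (T * (real j / 2^n)) \<omega> $ i\<bar>}
      \<le> C * (T * u) powr (2*H*k) / (u powr \<beta>)^(2*k)"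
    using fbm_increment_tail[OF B sT tT _ \<delta>, where i=i and k=k] dist u T unfolding C_def by simp
  also have "\<dots> = C * (T powr (2*H*k) * (u powr (2*H*k) / u powr (2*k*\<beta>)))"
    using T u by (simp add: powr_mult powr_power mult_ac)
  also have "u powr (2*H*k) / u powr (2*k*\<beta>) = ((1/2) powr (2*k*(H - \<beta>)))^n"
    unfolding u_def by (simp add: powr_diff[symmetric] power_powr_swap algebra_simps)
  finally show ?thesis
    unfolding \<delta>_eq C_def by (simp add: mult.assoc)
qed

lemma borel_measurable_vec_nth:
  fixes f :: "'a \<Rightarrow> real ^ 'n::finite"
  assumes "f \<in> borel_measurable M"
  shows "(\<lambda>x. f x $ i) \<in> borel_measurable M"
  using measurable_compose[OF assms borel_measurable_continuous_onI[OF continuous_on_component[OF continuous_on_id]]]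
  by simp

lemma fbm_dyadic_increments_eventually_le:
  fixes B :: "real \<Rightarrow> 'a \<Rightarrow> real ^ 'm::finite"
  assumes B: "is_fbm M H T B" and T: "T > 0" and \<beta>: "\<beta> < H"
  shows "AE \<omega> in M. \<exists>N. \<forall>n\<ge>N. \<forall>j<2^n.
           \<bar>B (T * (real (j+1) / 2^n)) \<omega> $ i - B (T * (real j / 2^n)) \<omega> $ i\<bar> \<le> ((1/2) powr \<beta>)^n"
proof -
  interpret prob_space M
    using B unfolding is_fbm_def by blast
  txt \<open>A Markov bound with the \<open>2k\<close>-th moment, where \<open>2k(H - \<beta>) > 1\<close>, makes the union bound
    over the \<open>2\<^sup>n\<close> increments of level \<open>n\<close> summable.\<close>
  obtain k :: nat where "1 / (2 * (H - \<beta>)) < real k"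
    using reals_Archimedean2 by blast
  then have "1 < 2 * real k * (H - \<beta>)"
    using \<beta> by (simp add: field_simps)
  then have "(1/2::real) powr (2 * real k * (H - \<beta>)) < (1/2) powr 1"
    by (intro powr_less_mono') auto
  moreover define q where "q = 2 * (1/2::real) powr (2 * k * (H - \<beta>))"
  ultimately have q: "0 \<le> q" "q < 1"
    by auto
  define C where "C = fact (2*k) / (2^k * fact k) * T powr (2*H*k)"
  define X where "X = (\<lambda>n j \<omega>. B (T * (real (j+1) / 2^n)) \<omega> $ i - B (T * (real j / 2^n)) \<omega> $ i)"
  define E where "E = (\<lambda>n j. {\<omega>\<in>space M. ((1/2) powr \<beta>)^n \<le> \<bar>X n j \<omega>\<bar>})"
  define A where "A = (\<lambda>n. \<Union>j<(2::nat)^n. E n j)"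
  have Bm: "B (T * (real j / 2^n)) \<in> borel_measurable M" if "j \<le> 2^n" for n j
    using B scaled_dyadic_in_interval[OF that, of T] T unfolding is_fbm_def by auto
  have "X n j \<in> borel_measurable M" if "j < 2^n" for n j
    unfolding X_def using Bm[of "j+1" n] Bm[of j n] that
    by (intro borel_measurable_diff borel_measurable_vec_nth) auto
  then have E_sets: "E n j \<in> sets M" if "j < 2^n" for n j
    unfolding E_def using that by measurable
  then have A_sets: "A n \<in> sets M" for n
    unfolding A_def by auto
  have bound: "measure M (A n) \<le> C * q^n" for n
  proof -
    have "measure M (A n) \<le> (\<Sum>j<(2::nat)^n. measure M (E n j))"
      unfolding A_def using E_sets by (intro measure_UNION_le) auto
    also have "\<dots> \<le> (\<Sum>j<(2::nat)^n. C * ((1/2) powr (2*k*(H - \<beta>)))^n)"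
    proof (rule sum_mono)
      fix j assume "j \<in> {..<(2::nat)^n}"
      then show "measure M (E n j) \<le> C * ((1/2) powr (2*k*(H - \<beta>)))^n"
        using fbm_dyadic_increment_tail[OF B T, where \<beta>=\<beta> and i=i and k=k] unfolding E_def X_def C_def by simp
    qed
    also have "\<dots> = C * q^n"
      by (simp add: q_def power_mult_distrib)
    finally show ?thesis .
  qed
  have "summable (\<lambda>n. C * q^n)"
    using q by (intro summable_mult summable_geometric) simp
  then have "summable (\<lambda>n. measure M (A n))"
    by (rule summable_comparison_test') (simp add: bound)
  then have "AE \<omega> in M. eventually (\<lambda>n. \<omega> \<in> space M - A n) sequentially"
    by (intro borel_cantelli_AE1[OF A_sets]) (auto simp: emeasure_eq_measure)
  then show ?thesis
  proof (rule eventually_mono)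
    fix \<omega> assume "eventually (\<lambda>n. \<omega> \<in> space M - A n) sequentially"
    then obtain N where N: "\<And>n. N \<le> n \<Longrightarrow> \<omega> \<in> space M - A n"
      unfolding eventually_sequentially by blast
    show "\<exists>N. \<forall>n\<ge>N. \<forall>j<2^n. \<bar>B (T * (real (j+1) / 2^n)) \<omega> $ i - B (T * (real j / 2^n)) \<omega> $ i\<bar>
        \<le> ((1/2) powr \<beta>)^n"
    proof (intro exI allI impI)
      fix n j :: nat assume n: "N \<le> n" and j: "j < 2^n"
      then have "\<not> ((1/2) powr \<beta>)^n \<le> \<bar>X n j \<omega>\<bar>"
        using N[OF n] unfolding A_def E_def by blast
      then show "\<bar>B (T * (real (j+1) / 2^n)) \<omega> $ i - B (T * (real j / 2^n)) \<omega> $ i\<bar> \<le> ((1/2) powr \<beta>)^n"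
        unfolding X_def by simp
    qed
  qed
qed

lemma fbm_component_holder:
  fixes B :: "real \<Rightarrow> 'a \<Rightarrow> real ^ 'm::finite"
  assumes B: "is_fbm M H T B" and T: "T > 0" and \<beta>: "0 < \<beta>" "\<beta> < H"
  shows "AE \<omega> in M. continuous_on {0..T} (\<lambda>t. B t \<omega>) \<longrightarrow> (\<exists>K. holder_on {0..T} \<beta> K (\<lambda>t. B t \<omega> $ i))"
  using fbm_dyadic_increments_eventually_le[OF B T \<beta>(2), of i]
proof (rule eventually_mono, intro impI)
  fix \<omega>
  assume "\<exists>N. \<forall>n\<ge>N. \<forall>j<2^n.
    \<bar>B (T * (real (j+1) / 2^n)) \<omega> $ i - B (T * (real j / 2^n)) \<omega> $ i\<bar> \<le> ((1/2) powr \<beta>)^n"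
    and C: "continuous_on {0..T} (\<lambda>t. B t \<omega>)"
  then obtain N where "\<forall>n\<ge>N. \<forall>j<2^n.
      \<bar>B (T * (real (j+1) / 2^n)) \<omega> $ i - B (T * (real j / 2^n)) \<omega> $ i\<bar> \<le> ((1/2) powr \<beta>)^n"
    by blast
  note N = this[folded real_norm_def]
  have "continuous_on {0..1} (\<lambda>u. B (T * u) \<omega>)"
    by (rule continuous_on_compose2[OF C]) (use T in \<open>auto intro!: continuous_intros simp: mult_le_cancel_left1\<close>)
  then have "continuous_on {0..1} (\<lambda>u. B (T * u) \<omega> $ i)"
    by (rule continuous_on_component)
  then obtain K where K: "holder_on {0..1} \<beta> K (\<lambda>u. B (T * u) \<omega> $ i)"
    using holder_on_if_dyadic_increments[OF _ \<beta>(1) N] by blast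
  show "\<exists>K. holder_on {0..T} \<beta> K (\<lambda>t. B t \<omega> $ i)"
    using holder_on_rescale[OF K T] by blast
qed

lemma fbm_holder:
  fixes B :: "real \<Rightarrow> 'a \<Rightarrow> real ^ 'm::finite"
  assumes B: "is_fbm M H T B" and T: "T > 0" and \<beta>: "0 < \<beta>" "\<beta> < H"
  shows "AE \<omega> in M. \<exists>K\<ge>0. holder_on {0..T} \<beta> K (\<lambda>t. B t \<omega>)"
proof -
  have "AE \<omega> in M. \<forall>i\<in>UNIV. continuous_on {0..T} (\<lambda>t. B t \<omega>) \<longrightarrow> (\<exists>K. holder_on {0..T} \<beta> K (\<lambda>t. B t \<omega> $ i))"
    using fbm_component_holder[OF B T \<beta>] by (intro AE_finite_allI) auto
  moreover have "AE \<omega> in M. continuous_on {0..T} (\<lambda>t. B t \<omega>)"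
    using B unfolding is_fbm_def by blast
  ultimately show ?thesis
  proof eventually_elim
    case (elim \<omega>)
    then have "\<forall>i. \<exists>K. holder_on {0..T} \<beta> K (\<lambda>t. B t \<omega> $ i)"
      by blast
    then obtain K where "\<forall>i. holder_on {0..T} \<beta> (K i) (\<lambda>t. B t \<omega> $ i)"
      by (rule choice[THEN exE])
    then have "holder_on {0..T} \<beta> (\<Sum>i\<in>UNIV. K i) (\<lambda>t. B t \<omega>)"
      by (intro holder_on_vec_sum) simp
    then have "holder_on {0..T} \<beta> (max 0 (\<Sum>i\<in>UNIV. K i)) (\<lambda>t. B t \<omega>)"
      by (rule holder_on_mono_const) simp
    then show ?case
      by (intro exI[of _ "max 0 (\<Sum>i\<in>UNIV. K i)"]) auto
  qed
qed

theorem mainTheorem5: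
  fixes M :: "'a measure" and B :: "real \<Rightarrow> 'a \<Rightarrow> real ^ 'm::finite"
    and H T \<alpha> :: real
  assumes "1/2 < H" "H < 1" "T > 0"
    and "is_fbm M H T B"
    and "1 - H < \<alpha>" "\<alpha> < 1/2"
  shows "AE \<omega> in M.
     (\<forall>n\<ge>1. W_space \<alpha> T (interp T n (\<lambda>t. B t \<omega>)) \<and>
             W_space \<alpha> T (\<lambda>t. interp T n (\<lambda>t. B t \<omega>) t - B t \<omega>)) \<and>
     (SUP n\<in>{1..}. Lambda \<alpha> T (interp T n (\<lambda>t. B t \<omega>))) < \<infinity> \<and>
     (\<lambda>n. Lambda \<alpha> T (\<lambda>t. interp T n (\<lambda>t. B t \<omega>) t - B t \<omega>)) \<longlonglongrightarrow> 0"
proof -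
  define \<beta>' where "\<beta>' = 1 - \<alpha> + (H - (1 - \<alpha>)) / 3"
  define \<beta> where "\<beta> = 1 - \<alpha> + 2 * (H - (1 - \<alpha>)) / 3"
  have \<alpha>: "0 < \<alpha>" "\<alpha> < 1"
    using assms by auto
  have \<beta>: "1 - \<alpha> < \<beta>'" "\<beta>' < \<beta>" "\<beta> < H" "\<beta> \<le> 1"
    using assms by (auto simp: \<beta>'_def \<beta>_def field_simps)
  have "AE \<omega> in M. \<exists>K\<ge>0. holder_on {0..T} \<beta> K (\<lambda>t. B t \<omega>)"
    using \<alpha> \<beta> by (intro fbm_holder[OF assms(4,3)]) auto
  then show ?thesis
    by (rule eventually_mono)
      (use interp_Lambda_bounds_if_holder[OF \<alpha> \<beta>(1,2,4) assms(3)] in blast)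
qed

end
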